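(* Let $\alpha\in\bar C$ and let $\zeta\in\alpha+\mathbb Z$ be such that $\ell_0\ell_r$ has no roots in $Z:=\{\eta\in\alpha+\mathbb Z\mid \eta<\zeta\}$. Then $\{1,S,\ldots,S^{r-1}\}$ is a local integral basis of $A$ at $Z\cup\{\zeta\}$.
   Context: Let $C$ be a field of characteristic zero and $\bar C$ its algebraic closure. Let $\sigma$ be the automorphism of $C(x)$ with $\sigma(f)(x)=f(x+1)$, and $C(x)[S]$ the Ore algebra with $Sf=\sigma(f)S$ for $f\in C(x)$; put $\Delta=S-1$. Fix $L=\ell_0+\ell_1S+\cdots+\ell_rS^r\in C[x][S]$ with $\ell_0\ell_r\neq0$, and let $A=C(x)[S]/C(x)[S]L$ (a left $C(x)[S]$-module); every element of $A$ is uniquely $f_0+f_1S+\cdots+f_{r-1}S^{r-1}$ with $f_i\in C(x)$. For $\alpha\in\bar C$, an operator $P=\sum_i p_iS^i\in C(x)[S]$ acts on sequences $b:\alpha+\mathbb Z\to\bar C((q))$ ($q$ a new indeterminate) by $(P\cdot b)(z)=\sum_i p_i(z+q)\,b(z+i)$. $\operatorname{Sol}_\alpha(L)$ is the set of such $b$ with $L\cdot b=0$ (an $r$-dimensional $\bar C((q))$-vector space); an element $f\in A$ acts on $b\in\operatorname{Sol}_\alpha(L)$ via any representative. For $a\in\bar C((q))$, $\nu_q(a)$ is the smallest exponent with nonzero coefficient ($\nu_q(0)=+\infty$). The value function is $\operatorname{val}_\alpha(f)=\min_{b\in\operatorname{Sol}_\alpha(L)}\big(\nu_q((f\cdot b)(\alpha))-\liminf_{n\to\infty}\nu_q(b(\alpha-n))\big)$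 (with $\infty-\infty=\infty$). $f$ is (locally) integral at $\alpha$ if $\operatorname{val}_\alpha(f)\ge0$. Let $C(x)_\alpha=\{p/q: p,q\in C[x],\ q(\alpha)\ne0\}$; the integral elements at $\alpha$ form a $C(x)_\alpha$-module $\mathcal O_\alpha$, and a basis of this module is a local integral basis at $\alpha$. For $Z\subseteq\bar C$, a basis of $A$ is a local integral basis at $Z$ if it is one at every $\alpha\in Z$. On $\alpha+\mathbb Z$ we write $\beta<\gamma$ if $\beta-\gamma$ is a negative integer. *)

theory Defs
  imports "HOL-Computational_Algebra.Computational_Algebra"
          "HOL-Library.Extended_Real"
begin

text \<open>The algebraic closure of C is modelled as the ambient type 'a (a field of
characteristic zero which is algebraically closed and algebraic over the subfield C).
C(x) is modelled as the fraction field 'a poly fract, restricted to those fractions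
whose numerator and denominator can be chosen with coefficients in C.\<close>

definition is_subfield :: "'a::field set \<Rightarrow> bool" where
  "is_subfield C \<longleftrightarrow> 0 \<in> C \<and> 1 \<in> C \<and> (\<forall>a\<in>C. \<forall>b\<in>C. a + b \<in> C \<and> a * b \<in> C)
     \<and> (\<forall>a\<in>C. - a \<in> C \<and> inverse a \<in> C)"

definition alg_closed_type :: "'a::field itself \<Rightarrow> bool" where
  "alg_closed_type _ \<longleftrightarrow> (\<forall>p::'a poly. degree p \<ge> 1 \<longrightarrow> (\<exists>x. poly p x = 0))"

definition polyC :: "'a::field set \<Rightarrow> 'a poly \<Rightarrow> bool" where
  "polyC C p \<longleftrightarrow> set (coeffs p) \<subseteq> C"

definition algebraic_over :: "'a::field set \<Rightarrow> bool" where
  "algebraic_over C \<longleftrightarrow> (\<forall>x::'a. \<exists>p. p \<noteq> 0 \<and> polyC C p \<and> poly p x = 0)"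

definition ratfunC :: "'a::field set \<Rightarrow> 'a poly fract \<Rightarrow> bool" where
  "ratfunC C f \<longleftrightarrow> (\<exists>n d. polyC C n \<and> polyC C d \<and> d \<noteq> 0 \<and> f = Fract n d)"

definition local_ratfun :: "'a::field set \<Rightarrow> 'a \<Rightarrow> 'a poly fract \<Rightarrow> bool" where
  "local_ratfun C \<alpha> f \<longleftrightarrow> (\<exists>n d. polyC C n \<and> polyC C d \<and> poly d \<alpha> \<noteq> 0 \<and> f = Fract n d)"

text \<open>Evaluation at z + q, as Laurent series in q.\<close>
definition pev :: "'a::field poly \<Rightarrow> 'a \<Rightarrow> 'a fls" where
  "pev p z = poly (map_poly fls_const p) (fls_const z + fls_X)"

definition rev_at :: "'a::field_char_0 poly fract \<Rightarrow> 'a \<Rightarrow> 'a fls" where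
  "rev_at f z = (THE v. \<forall>n d. d \<noteq> 0 \<longrightarrow> f = Fract n d \<longrightarrow> v = pev n z / pev d z)"

text \<open>Sequences b : alpha + Z \<rightarrow> Cbar((q)) are modelled as b :: int \<Rightarrow> 'a fls,
 with b n standing for b(alpha + n). Operator L given by coefficients l 0, ..., l r.\<close>
definition is_sol :: "(nat \<Rightarrow> 'a::field poly) \<Rightarrow> nat \<Rightarrow> 'a \<Rightarrow> (int \<Rightarrow> 'a fls) \<Rightarrow> bool" where
  "is_sol l r \<alpha> b \<longleftrightarrow> (\<forall>n::int. (\<Sum>i\<le>r. pev (l i) (\<alpha> + of_int n) * b (n + int i)) = 0)"

definition nu_q :: "'a::field fls \<Rightarrow> ereal" where
  "nu_q a = (if a = 0 then \<infinity> else ereal (of_int (fls_subdegree a)))"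

text \<open>(f . b)(alpha) for f = f_0 + f_1 S + ... + f_(r-1) S^(r-1).\<close>
definition act_at :: "nat \<Rightarrow> (nat \<Rightarrow> 'a::field_char_0 poly fract) \<Rightarrow> 'a \<Rightarrow> (int \<Rightarrow> 'a fls) \<Rightarrow> 'a fls" where
  "act_at r f \<alpha> b = (\<Sum>i<r. rev_at (f i) \<alpha> * b (int i))"

definition ediff :: "ereal \<Rightarrow> ereal \<Rightarrow> ereal" where
  "ediff a c = (if a = \<infinity> then \<infinity> else a - c)"

definition val_at :: "(nat \<Rightarrow> 'a::field_char_0 poly) \<Rightarrow> nat \<Rightarrow> 'a \<Rightarrow> (nat \<Rightarrow> 'a poly fract) \<Rightarrow> ereal" where
  "val_at l r \<alpha> f = (INF b \<in> {b. is_sol l r \<alpha> b}.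
      ediff (nu_q (act_at r f \<alpha> b)) (liminf (\<lambda>n::nat. nu_q (b (- int n)))))"

text \<open>Elements of A, in canonical form (coefficients f 0, ..., f (r-1)).\<close>
definition A_elem :: "'a::field set \<Rightarrow> nat \<Rightarrow> (nat \<Rightarrow> 'a poly fract) \<Rightarrow> bool" where
  "A_elem C r f \<longleftrightarrow> (\<forall>i. ratfunC C (f i)) \<and> (\<forall>i\<ge>r. f i = 0)"

definition integral_elems :: "'a::field_char_0 set \<Rightarrow> (nat \<Rightarrow> 'a poly) \<Rightarrow> nat \<Rightarrow> 'a \<Rightarrow> (nat \<Rightarrow> 'a poly fract) set" where
  "integral_elems C l r \<alpha> = {f. A_elem C r f \<and> val_at l r \<alpha> f \<ge> 0}"

definition local_integral_basis ::
  "'a::field_char_0 set \<Rightarrow> (nat \<Rightarrow> 'a poly) \<Rightarrow> nat \<Rightarrow> 'a \<Rightarrow> (nat \<Rightarrow> nat \<Rightarrow> 'a poly fract) \<Rightarrow> nat \<Rightarrow> bool" where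
  "local_integral_basis C l r \<alpha> B m \<longleftrightarrow>
     (\<forall>j<m. B j \<in> integral_elems C l r \<alpha>) \<and>
     (\<forall>f\<in>integral_elems C l r \<alpha>. \<exists>!c. (\<forall>j<m. local_ratfun C \<alpha> (c j)) \<and> (\<forall>j\<ge>m. c j = 0) \<and>
         f = (\<lambda>i. \<Sum>j<m. c j * B j i))"

definition S_pow :: "nat \<Rightarrow> nat \<Rightarrow> 'a::field poly fract" where
  "S_pow j = (\<lambda>i. if i = j then 1 else 0)"

definition shift_less :: "'a::field \<Rightarrow> 'a \<Rightarrow> bool" where
  "shift_less \<beta> \<gamma> \<longleftrightarrow> (\<exists>n::nat. n > 0 \<and> \<beta> - \<gamma> = - of_nat n)"

end

theory Submission
  imports Defs
begin

text \<open>For n < 0 neither l_0 nor l_r vanishes at \<beta> + n, so the extreme coefficients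
  l_0(\<beta> + n + q) and l_r(\<beta> + n + q) of the recurrence are units of the power series ring.
  Run backwards from the initial values b(\<beta> + i) = [i = j], the recurrence therefore yields a
  solution with nonnegative valuation at every \<beta> - n; testing an integral element
  f = \<Sum> f_i S^i against it gives nu_q(f_j(\<beta> + q)) \<ge> 0, i.e. f_j lies in C(x)_\<beta>.
  Run forwards at negative indices, it shows that the minimal valuation of any solution over r
  consecutive points can only decrease towards -\<infinity>, so the liminf is at most
  nu_q(b(\<beta> + j)) = nu_q((S^j b)(\<beta>)), i.e. each S^j is integral.
  Deciding membership in C(x)_\<beta> only requires cancelling the minimal polynomial of \<beta> over C.\<close>

lemma pev_eq_fps_of_poly: "pev p z = fps_to_fls (fps_of_poly (p \<circ>\<^sub>p [:z, 1:]))"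
proof (induction p rule: pCons_induct)
  case 0 then show ?case by (simp add: pev_def)
next
  case (pCons a p)
  have "pev (pCons a p) z = fls_const a + (fls_const z + fls_X) * pev p z"
    using pCons by (simp add: pev_def map_poly_pCons)
  also have "\<dots> = fps_to_fls (fps_of_poly (pCons a p \<circ>\<^sub>p [:z, 1:]))"
    by (simp add: pCons.IH pcompose_pCons fps_of_poly_simps fls_times_fps_to_fls
        fps_of_poly_pCons algebra_simps)
  finally show ?case .
qed

lemma pev_mult: "pev (p * q) z = pev p z * pev q z"
  by (simp add: pev_eq_fps_of_poly pcompose_mult fps_of_poly_mult fls_times_fps_to_fls)

lemma pev_0 [simp]: "pev 0 z = 0" and pev_1 [simp]: "pev 1 z = 1"
  by (simp_all add: pev_def)

lemma pev_eq_0_iff [simp]: "pev p z = 0 \<longleftrightarrow> p = 0"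
  by (simp add: pev_eq_fps_of_poly fps_of_poly_eq_iff[of _ 0, simplified] pcompose_eq_0_iff)

lemma order_pcompose_shift: "order 0 (p \<circ>\<^sub>p [:z, 1:]) = order z (p :: 'a::field poly)"
proof (cases "p = 0")
  case False
  obtain s where s: "p = [:-z, 1:] ^ order z p * s" "\<not> [:-z, 1:] dvd s"
    using order_decomp[OF False] by blast
  have s0: "poly (s \<circ>\<^sub>p [:z, 1:]) 0 \<noteq> 0"
    using s(2) by (simp add: poly_pcompose poly_eq_0_iff_dvd)
  have "[:-z, 1:] ^ n \<circ>\<^sub>p [:z, 1:] = [:-0, 1:] ^ n" for n
    by (induction n) (simp_all add: pcompose_mult pcompose_pCons one_pCons del: mult_pCons_left)
  then have "p \<circ>\<^sub>p [:z, 1:] = [:-0, 1:] ^ order z p * (s \<circ>\<^sub>p [:z, 1:])"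
    by (subst s(1)) (simp add: pcompose_mult)
  moreover have "s \<circ>\<^sub>p [:z, 1:] \<noteq> 0"
    using s0 by auto
  ultimately show ?thesis
    using s0 order_power_n_n[of 0 "order z p"] by (simp add: order_mult order_0I)
qed (simp add: order_def)

lemma nu_q_pev: "p \<noteq> 0 \<Longrightarrow> nu_q (pev p z) = ereal (real (order z p))"
  by (simp add: nu_q_def pev_eq_fps_of_poly fls_subdegree_fls_to_fps subdegree_fps_of_poly
      pcompose_eq_0_iff fps_of_poly_eq_iff[of _ 0, simplified] order_pcompose_shift)

lemma nu_q_0 [simp]: "nu_q 0 = \<infinity>"
  by (simp add: nu_q_def)

lemma nu_q_mult: "nu_q (a * b) = nu_q a + nu_q (b :: 'a::field fls)"
  by (cases "a = 0"; cases "b = 0") (auto simp: nu_q_def)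

lemma nu_q_mult_ge: "0 \<le> nu_q a \<Longrightarrow> nu_q b \<le> nu_q (a * b :: 'a::field fls)"
  by (cases "nu_q a"; cases "nu_q b") (auto simp: nu_q_mult)

lemma nu_q_uminus [simp]: "nu_q (- a) = nu_q (a :: 'a::field fls)"
  by (simp add: nu_q_def)

lemma nu_q_divide: "b \<noteq> 0 \<Longrightarrow> nu_q (a / b) = nu_q a - nu_q (b :: 'a::field fls)"
  by (cases "a = 0") (auto simp: nu_q_def fls_divide_subdegree)

lemma nu_q_add_ge_min: "min (nu_q a) (nu_q b) \<le> nu_q (a + b :: 'a::field fls)"
proof (cases "a = 0 \<or> b = 0 \<or> a + b = 0")
  case False
  then have "min (fls_subdegree a) (fls_subdegree b) \<le> fls_subdegree (a + b)"
    by (simp add: fls_plus_subdegree)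
  then show ?thesis
    using False by (auto simp: nu_q_def min_def)
qed (auto simp: nu_q_def)

lemma nu_q_sum_ge:
  "(\<And>i. i \<in> I \<Longrightarrow> v \<le> nu_q (f i)) \<Longrightarrow> v \<le> nu_q (\<Sum>i\<in>I. f i :: 'a::field fls)"
proof (induction I rule: infinite_finite_induct)
  case (insert i I)
  then show ?case
    by (simp add: order.trans[OF _ nu_q_add_ge_min])
qed (simp_all add: nu_q_def)

lemma nu_q_sum_gt:
  "finite I \<Longrightarrow> I \<noteq> {} \<Longrightarrow> (\<And>i. i \<in> I \<Longrightarrow> v < nu_q (f i)) \<Longrightarrow>
    v < nu_q (\<Sum>i\<in>I. f i :: 'a::field fls)"
proof (induction I rule: finite_ne_induct)
  case (insert i I)
  then show ?case
    by (simp add: less_le_trans[OF _ nu_q_add_ge_min])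
qed simp

lemma rev_at_Fract: "d \<noteq> 0 \<Longrightarrow> rev_at (Fract n d) z = pev n z / pev d z"
  unfolding rev_at_def
proof (rule the_equality)
  assume d: "d \<noteq> 0"
  show "\<forall>n' d'. d' \<noteq> 0 \<longrightarrow> Fract n d = Fract n' d' \<longrightarrow> pev n z / pev d z = pev n' z / pev d' z"
  proof (intro allI impI)
    fix n' d' assume d': "d' \<noteq> 0" and "Fract n d = Fract n' d'"
    then have "pev n z * pev d' z = pev n' z * pev d z"
      using d by (simp add: eq_fract flip: pev_mult)
    then show "pev n z / pev d z = pev n' z / pev d' z"
      using d d' by (simp add: field_simps)
  qed
qed blast

lemma rev_at_0 [simp]: "rev_at 0 z = 0" and rev_at_1 [simp]: "rev_at 1 z = 1"
  by (simp_all add: Zero_fract_def One_fract_def rev_at_Fract)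

locale subfield =
  fixes C :: "'a::field set"
  assumes is_subfield: "is_subfield C"
begin

lemma zero_mem: "0 \<in> C" and one_mem: "1 \<in> C"
  and add_mem: "a \<in> C \<Longrightarrow> b \<in> C \<Longrightarrow> a + b \<in> C"
  and mult_mem: "a \<in> C \<Longrightarrow> b \<in> C \<Longrightarrow> a * b \<in> C"
  and uminus_mem: "a \<in> C \<Longrightarrow> - a \<in> C"
  and inverse_mem: "a \<in> C \<Longrightarrow> inverse a \<in> C"
  using is_subfield by (auto simp: is_subfield_def)

lemma divide_mem: "a \<in> C \<Longrightarrow> b \<in> C \<Longrightarrow> a / b \<in> C"
  by (simp add: divide_inverse mult_mem inverse_mem)

lemma diff_mem: "a \<in> C \<Longrightarrow> b \<in> C \<Longrightarrow> a - b \<in> C"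
  using add_mem[OF _ uminus_mem] by simp

lemma sum_mem: "(\<And>i. i \<in> I \<Longrightarrow> f i \<in> C) \<Longrightarrow> sum f I \<in> C"
  by (induction I rule: infinite_finite_induct) (simp_all add: zero_mem add_mem)

lemma polyC_iff: "polyC C p \<longleftrightarrow> (\<forall>n. coeff p n \<in> C)"
  unfolding polyC_def using forall_coeffs_conv[of "\<lambda>x. x \<in> C" p] zero_mem by auto

lemma polyC_0: "polyC C 0" and polyC_1: "polyC C 1"
  by (simp_all add: polyC_iff zero_mem one_mem coeff_1)

lemma polyC_add: "polyC C p \<Longrightarrow> polyC C q \<Longrightarrow> polyC C (p + q)"
  and polyC_diff: "polyC C p \<Longrightarrow> polyC C q \<Longrightarrow> polyC C (p - q)"
  and polyC_mult: "polyC C p \<Longrightarrow> polyC C q \<Longrightarrow> polyC C (p * q)"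
  and polyC_monom: "c \<in> C \<Longrightarrow> polyC C (monom c k)"
  by (simp_all add: polyC_iff zero_mem add_mem diff_mem coeff_mult sum_mem mult_mem coeff_monom)

lemma polyC_division:
  assumes q: "q \<noteq> 0" "polyC C q" and p: "polyC C p"
  shows "\<exists>s t. polyC C s \<and> polyC C t \<and> p = q * s + t \<and> (t = 0 \<or> degree t < degree q)"
  using p
proof (induction "degree p" arbitrary: p rule: less_induct)
  case less
  show ?case
  proof (cases "p = 0 \<or> degree p < degree q")
    case True
    then show ?thesis
      using less.prems polyC_0 by (intro exI[of _ 0] exI[of _ p]) auto
  next
    case False
    then have dg: "degree q \<le> degree p" by auto
    define c where "c = lead_coeff p / lead_coeff q"
    define k where "k = degree p - degree q"
    define p' where "p' = p - monom c k * q"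
    have c: "c \<in> C"
      unfolding c_def using less.prems q by (simp add: polyC_iff divide_mem)
    have p': "polyC C p'"
      unfolding p'_def using less.prems q c by (simp add: polyC_diff polyC_mult polyC_monom)
    have "degree (monom c k * q) \<le> degree p"
      using degree_mult_le[of "monom c k" q] degree_monom_le[of c k] dg unfolding k_def by linarith
    then have "degree p' \<le> degree p"
      unfolding p'_def using degree_diff_le[OF order.refl] by blast
    moreover have "coeff p' (degree p) = 0"
      using dg q unfolding p'_def c_def k_def by (simp add: coeff_monom_mult)
    ultimately consider "p' = 0" | "degree p' < degree p"
      by (metis le_neq_implies_less leading_coeff_0_iff)
    then show ?thesis
    proof cases
      case 1
      then have "p = q * monom c k + 0"
        unfolding p'_def by (simp add: mult.commute)
      then show ?thesis
        using c polyC_0 polyC_monom by blast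
    next
      case 2
      from less.hyps[OF this p'] obtain s t where st: "polyC C s" "polyC C t" "p' = q * s + t"
        "t = 0 \<or> degree t < degree q" by blast
      have "p = q * (s + monom c k) + t"
        using st(3) unfolding p'_def by (simp add: algebra_simps)
      then show ?thesis
        using st c by (metis polyC_add polyC_monom)
    qed
  qed
qed

lemma minimal_root_poly_dvd:
  assumes p: "p \<noteq> 0" "polyC C p" "poly p z = 0"
    and minimal: "\<And>p'. p' \<noteq> 0 \<Longrightarrow> polyC C p' \<Longrightarrow> poly p' z = 0 \<Longrightarrow> degree p \<le> degree p'"
    and n: "polyC C n" "poly n z = 0"
  shows "\<exists>s. polyC C s \<and> n = p * s"
proof -
  obtain s t where st: "polyC C s" "polyC C t" "n = p * s + t" "t = 0 \<or> degree t < degree p"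
    using polyC_division[OF p(1,2) n(1)] by blast
  have "poly t z = 0"
    using st(3) n(2) p(3) by simp
  then have "t = 0"
    using st(2,4) minimal[of t] by fastforce
  then show ?thesis
    using st by auto
qed

lemma Fract_local_repr:
  assumes "polyC C n" "polyC C d" "d \<noteq> 0" "n \<noteq> 0" "order z d \<le> order z n"
  shows "\<exists>n' d'. polyC C n' \<and> polyC C d' \<and> poly d' z \<noteq> 0 \<and> Fract n d = Fract n' d'"
  using assms
proof (induction "degree d" arbitrary: n d rule: less_induct)
  case less
  show ?case
  proof (cases "poly d z = 0")
    case False
    then show ?thesis
      using less.prems(1,2) by blast
  next
    case True
    then have "order z d \<noteq> 0"
      using less.prems(3) by (simp add: order_eq_0_iff)
    then have "order z n \<noteq> 0"
      using less.prems(5) by linarith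
    then have "poly n z = 0"
      by (simp add: order_root)
    let ?root = "\<lambda>p. p \<noteq> 0 \<and> polyC C p \<and> poly p z = 0"
    obtain p where p: "?root p" and minimal: "\<forall>p'. ?root p' \<longrightarrow> degree p \<le> degree p'"
      using ex_has_least_nat[of ?root d degree] less.prems(2,3) True by blast
    obtain s where s: "polyC C s" "d = p * s"
      using minimal_root_poly_dvd[of p z d] p minimal less.prems(2) True by blast
    obtain s' where s': "polyC C s'" "n = p * s'"
      using minimal_root_poly_dvd[of p z n] p minimal less.prems(1) \<open>poly n z = 0\<close> by blast
    have "s \<noteq> 0" "s' \<noteq> 0"
      using s(2) s'(2) less.prems(3,4) by auto
    have "degree p \<noteq> 0"
    proof
      assume "degree p = 0"
      then obtain c where "p = [:c:]"
        by (rule degree_eq_zeroE)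
      then show False
        using p by auto
    qed
    then have "degree s < degree d"
      using s(2) p \<open>s \<noteq> 0\<close> by (simp add: degree_mult_eq)
    moreover have "order z s \<le> order z s'"
      using less.prems(5) s(2) s'(2) p \<open>s \<noteq> 0\<close> \<open>s' \<noteq> 0\<close> by (simp add: order_mult)
    ultimately obtain n' d' where "polyC C n'" "polyC C d'" "poly d' z \<noteq> 0" "Fract s' s = Fract n' d'"
      using less.hyps[OF _ s'(1) s(1) \<open>s \<noteq> 0\<close> \<open>s' \<noteq> 0\<close>] by blast
    moreover have "Fract n d = Fract s' s"
      using s(2) s'(2) \<open>s \<noteq> 0\<close> p by (simp add: eq_fract)
    ultimately show ?thesis
      by auto
  qed
qed

end

lemma local_ratfun_if_nu_q_nonneg:
  assumes "subfield C" and f: "ratfunC C f" and nonneg: "0 \<le> nu_q (rev_at f z)"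
  shows "local_ratfun C z f"
proof -
  interpret subfield C by fact
  obtain n d where nd: "polyC C n" "polyC C d" "d \<noteq> 0" "f = Fract n d"
    using f unfolding ratfunC_def by blast
  show ?thesis
  proof (cases "n = 0")
    case True
    then have "f = Fract 0 1"
      using nd by (simp add: eq_fract)
    then show ?thesis
      unfolding local_ratfun_def using polyC_0 polyC_1 by fastforce
  next
    case False
    have "nu_q (rev_at f z) = ereal (real (order z n)) - ereal (real (order z d))"
      using nd False by (simp add: rev_at_Fract nu_q_divide nu_q_pev)
    then have "order z d \<le> order z n"
      using nonneg by simp
    then show ?thesis
      using Fract_local_repr[OF nd(1-3) False] nd(4) unfolding local_ratfun_def by blast
  qed
qed

function rec_sol :: "(int \<Rightarrow> nat \<Rightarrow> 'b::field) \<Rightarrow> nat \<Rightarrow> (nat \<Rightarrow> 'b) \<Rightarrow> int \<Rightarrow> 'b" where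
  "rec_sol c r w n =
     (if 0 \<le> n \<and> n < int r then w (nat n)
      else if int r \<le> n then
        - (\<Sum>j<r. c (n - int r) j * rec_sol c r w (n - int r + int j)) / c (n - int r) r
      else - (\<Sum>j\<in>{1..r}. c n j * rec_sol c r w (n + int j)) / c n 0)"
  by auto
termination
  by (relation "measure (\<lambda>(c, r, w, n). if 0 \<le> n then nat n else nat (int r - n))") auto

declare rec_sol.simps [simp del]

lemma rec_sol_initial: "i < r \<Longrightarrow> rec_sol c r w (int i) = w i"
  by (simp add: rec_sol.simps)

lemma rec_sol_solves:
  assumes "c n r \<noteq> 0" "c n 0 \<noteq> 0"
  shows "(\<Sum>i\<le>r. c n i * rec_sol c r w (n + int i)) = 0"
proof (cases "0 \<le> n")
  case True
  have "rec_sol c r w (n + int r) = - (\<Sum>j<r. c n j * rec_sol c r w (n + int j)) / c n r"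
    using True by (subst rec_sol.simps) simp
  then show ?thesis
    using assms(1) by (simp add: lessThan_Suc_atMost[symmetric])
next
  case False
  have "rec_sol c r w n = - (\<Sum>j\<in>{1..r}. c n j * rec_sol c r w (n + int j)) / c n 0"
    using False by (subst rec_sol.simps) simp
  moreover have "{..r} = insert 0 {1..r}"
    by auto
  ultimately show ?thesis
    using assms(2) by simp
qed

lemma nu_q_rec_sol_nonneg:
  fixes c :: "int \<Rightarrow> nat \<Rightarrow> 'a::field fls"
  assumes c: "\<And>n j. 0 \<le> nu_q (c n j)" and c0: "\<And>n. n < 0 \<Longrightarrow> nu_q (c n 0) = 0"
    and w: "\<And>i. i < r \<Longrightarrow> 0 \<le> nu_q (w i)"
  shows "n < int r \<Longrightarrow> 0 \<le> nu_q (rec_sol c r w n)"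
proof (induction "nat (int r - n)" arbitrary: n rule: less_induct)
  case less
  show ?case
  proof (cases "0 \<le> n")
    case True
    then show ?thesis
      using less.prems w[of "nat n"] by (subst rec_sol.simps) auto
  next
    case False
    have "0 \<le> nu_q (\<Sum>j\<in>{1..r}. c n j * rec_sol c r w (n + int j))"
      using False by (intro nu_q_sum_ge) (auto simp: nu_q_mult c less.hyps)
    moreover have "rec_sol c r w n = - (\<Sum>j\<in>{1..r}. c n j * rec_sol c r w (n + int j)) / c n 0"
      using False by (subst rec_sol.simps) simp
    moreover have "c n 0 \<noteq> 0"
      using c0[of n] False by (auto simp: nu_q_def)
    ultimately show ?thesis
      using c0[of n] False by (simp add: nu_q_divide)
  qed
qed

lemma nu_q_recurrence_top_gt:
  fixes c b :: "nat \<Rightarrow> 'a::field fls"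
  assumes rec: "(\<Sum>i\<le>r. c i * b i) = 0" and "0 < r"
    and top: "nu_q (c r) = 0" and c: "\<And>i. 0 \<le> nu_q (c i)"
    and b: "\<And>i. i < r \<Longrightarrow> v < nu_q (b i)"
  shows "v < nu_q (b r)"
proof -
  have "c r * b r = - (\<Sum>i<r. c i * b i)"
    using rec by (simp add: lessThan_Suc_atMost[symmetric] eq_neg_iff_add_eq_0 add.commute)
  then have "nu_q (b r) = nu_q (\<Sum>i<r. c i * b i)"
    using top by (metis add_0 nu_q_mult nu_q_uminus)
  moreover have "v < nu_q (\<Sum>i<r. c i * b i)"
    using \<open>0 < r\<close> b c by (intro nu_q_sum_gt) (auto intro: less_le_trans[OF _ nu_q_mult_ge])
  ultimately show ?thesis
    by simp
qed

lemma recurrence_window_le: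
  fixes c :: "int \<Rightarrow> nat \<Rightarrow> 'a::field fls"
  assumes rec: "\<And>n. (\<Sum>i\<le>r. c n i * b (n + int i)) = 0"
    and top: "\<And>n. n < 0 \<Longrightarrow> nu_q (c n r) = 0" and c: "\<And>n i. 0 \<le> nu_q (c n i)"
    and "j < r"
  shows "\<exists>i<r. nu_q (b (int i - int m)) \<le> nu_q (b (int j))"
proof (induction m)
  case 0
  then show ?case
    using \<open>j < r\<close> by auto
next
  case (Suc m)
  let ?v = "nu_q (b (int j))"
  show ?case
  proof (rule ccontr)
    assume "\<not> ?thesis"
    then have gt: "?v < nu_q (b (int i - int (Suc m)))" if "i < r" for i
      using that by (auto simp: not_le)
    have top_gt: "?v < nu_q (b (int r - int (Suc m)))"
      using nu_q_recurrence_top_gt[OF rec[of "- int (Suc m)"]] top c gt \<open>j < r\<close>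
      by (simp add: algebra_simps)
    have "?v < nu_q (b (int i - int m))" if "i < r" for i
    proof (cases "Suc i < r")
      case True
      then show ?thesis
        using gt[of "Suc i"] by (simp add: algebra_simps)
    next
      case False
      then have "int i - int m = int r - int (Suc m)"
        using that by simp
      then show ?thesis
        using top_gt by (simp only:)
    qed
    then show False
      using Suc.IH by (meson not_le)
  qed
qed

lemma liminf_le_if_frequently:
  fixes f :: "nat \<Rightarrow> ereal"
  assumes "\<And>N. \<exists>n\<ge>N. f n \<le> v"
  shows "liminf f \<le> v"
  unfolding liminf_SUP_INF
proof (rule SUP_least)
  fix N
  obtain n where "N \<le> n" "f n \<le> v"
    using assms by blast
  then show "(INF m\<in>{N..}. f m) \<le> v"
    by (intro INF_lower2[of n]) auto
qed

lemma liminf_nu_q_le: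
  fixes c :: "int \<Rightarrow> nat \<Rightarrow> 'a::field fls"
  assumes rec: "\<And>n. (\<Sum>i\<le>r. c n i * b (n + int i)) = 0"
    and top: "\<And>n. n < 0 \<Longrightarrow> nu_q (c n r) = 0" and c: "\<And>n i. 0 \<le> nu_q (c n i)"
    and "j < r"
  shows "liminf (\<lambda>n. nu_q (b (- int n))) \<le> nu_q (b (int j))"
proof (rule liminf_le_if_frequently)
  fix N
  obtain i where "i < r" "nu_q (b (int i - int (N + r))) \<le> nu_q (b (int j))"
    using recurrence_window_le[OF rec top c \<open>j < r\<close>] by blast
  moreover have "int i - int (N + r) = - int (N + r - i)"
    using \<open>i < r\<close> by simp
  ultimately show "\<exists>n\<ge>N. nu_q (b (- int n)) \<le> nu_q (b (int j))"
    by (intro exI[of _ "N + r - i"]) auto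
qed

lemma ediff_nonneg_if_le: "c \<le> a \<Longrightarrow> 0 \<le> ediff a c"
  unfolding ediff_def by (cases a; cases c) auto

lemma nonneg_if_ediff_nonneg: "0 \<le> ediff a c \<Longrightarrow> 0 \<le> c \<Longrightarrow> 0 \<le> a"
  unfolding ediff_def by (cases a; cases c) (auto split: if_splits)

lemma S_pow_sum: "(\<Sum>j<r. c j * S_pow j i) = (if i < r then c i else 0)"
  by (simp add: S_pow_def if_distrib[of "(*) _"] cong: if_cong)

lemma act_at_S_pow: "j < r \<Longrightarrow> act_at r (S_pow j) z b = b (int j)"
  by (simp add: act_at_def S_pow_def if_distrib[of "\<lambda>x. rev_at x z * _"] cong: if_cong)

lemma shift_less_add_neg:
  assumes "\<beta> = \<zeta> \<or> shift_less \<beta> \<zeta>" and "n < 0"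
  shows "shift_less (\<beta> + of_int n) \<zeta>"
proof -
  have "\<exists>m::nat. \<beta> - \<zeta> = - of_nat m"
    using assms(1) unfolding shift_less_def by (metis diff_self minus_zero of_nat_0)
  then obtain m :: nat where m: "\<beta> - \<zeta> = - of_nat m" ..
  have "\<beta> + of_int n - \<zeta> = - of_nat (m + nat (- n))"
    using m \<open>n < 0\<close> by (simp add: of_nat_nat algebra_simps)
  then show ?thesis
    unfolding shift_less_def using \<open>n < 0\<close> by (intro exI[of _ "m + nat (- n)"]) simp
qed

locale regular_below =
  fixes C :: "'a::field_char_0 set" and l :: "nat \<Rightarrow> 'a poly" and r :: nat and \<beta> :: 'a
  assumes subfield: "subfield C"
    and l0: "l 0 \<noteq> 0" and lr: "l r \<noteq> 0"
    and no_root_below: "\<And>n::int. n < 0 \<Longrightarrow> poly (l 0 * l r) (\<beta> + of_int n) \<noteq> 0"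
begin

definition rec_coeff :: "int \<Rightarrow> nat \<Rightarrow> 'a fls" where
  "rec_coeff n i = pev (l i) (\<beta> + of_int n)"

lemma is_sol_iff: "is_sol l r \<beta> b \<longleftrightarrow> (\<forall>n. (\<Sum>i\<le>r. rec_coeff n i * b (n + int i)) = 0)"
  by (simp add: is_sol_def rec_coeff_def)

lemma nu_q_rec_coeff_nonneg: "0 \<le> nu_q (rec_coeff n i)"
  by (cases "l i = 0") (simp_all add: rec_coeff_def nu_q_pev)

lemma nu_q_rec_coeff_0: "n < 0 \<Longrightarrow> nu_q (rec_coeff n 0) = 0"
  and nu_q_rec_coeff_r: "n < 0 \<Longrightarrow> nu_q (rec_coeff n r) = 0"
  using no_root_below[of n] l0 lr by (simp_all add: rec_coeff_def nu_q_pev order_0I)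

lemma S_pow_A_elem:
  assumes "j < r"
  shows "A_elem C r (S_pow j)"
proof -
  interpret subfield C by (fact subfield)
  have "ratfunC C 1" "ratfunC C 0"
    unfolding ratfunC_def using polyC_0 polyC_1
    by (metis One_fract_def Zero_fract_def one_neq_zero)+
  then show ?thesis
    using assms by (auto simp: A_elem_def S_pow_def)
qed

lemma S_pow_integral:
  assumes "j < r"
  shows "S_pow j \<in> integral_elems C l r \<beta>"
proof -
  have "0 \<le> ediff (nu_q (act_at r (S_pow j) \<beta> b)) (liminf (\<lambda>n. nu_q (b (- int n))))"
    if "is_sol l r \<beta> b" for b
  proof -
    have "liminf (\<lambda>n. nu_q (b (- int n))) \<le> nu_q (b (int j))"
      using that \<open>j < r\<close> by (intro liminf_nu_q_le[where c = rec_coeff])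
        (auto simp: is_sol_iff nu_q_rec_coeff_r nu_q_rec_coeff_nonneg)
    then show ?thesis
      using \<open>j < r\<close> by (simp add: act_at_S_pow ediff_nonneg_if_le)
  qed
  then have "0 \<le> val_at l r \<beta> (S_pow j)"
    unfolding val_at_def by (blast intro: INF_greatest)
  then show ?thesis
    using S_pow_A_elem[OF \<open>j < r\<close>] by (simp add: integral_elems_def)
qed

lemma integral_coeff_local:
  assumes f: "f \<in> integral_elems C l r \<beta>" and "j < r"
  shows "local_ratfun C \<beta> (f j)"
proof -
  define w where "w = (\<lambda>i::nat. if i = j then (1::'a fls) else 0)"
  define b where "b = rec_sol rec_coeff r w"
  have "is_sol l r \<beta> b"
    unfolding is_sol_iff b_def by (intro allI rec_sol_solves) (simp_all add: rec_coeff_def l0 lr)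
  then have "val_at l r \<beta> f \<le> ediff (nu_q (act_at r f \<beta> b)) (liminf (\<lambda>n. nu_q (b (- int n))))"
    unfolding val_at_def by (intro INF_lower) simp
  then have val: "0 \<le> ediff (nu_q (act_at r f \<beta> b)) (liminf (\<lambda>n. nu_q (b (- int n))))"
    using f by (auto simp: integral_elems_def)
  have "0 \<le> nu_q (b (- int n))" for n
    unfolding b_def using \<open>j < r\<close>
    by (intro nu_q_rec_sol_nonneg) (auto simp: w_def nu_q_def[of 1] nu_q_rec_coeff_nonneg nu_q_rec_coeff_0)
  then have "0 \<le> liminf (\<lambda>n. nu_q (b (- int n)))"
    by (intro Liminf_bounded) simp
  moreover have "act_at r f \<beta> b = rev_at (f j) \<beta>"
    using \<open>j < r\<close> by (simp add: act_at_def b_def w_def rec_sol_initial if_distrib cong: if_cong)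
  ultimately have "0 \<le> nu_q (rev_at (f j) \<beta>)"
    using val nonneg_if_ediff_nonneg by metis
  moreover have "ratfunC C (f j)"
    using f by (simp add: integral_elems_def A_elem_def)
  ultimately show ?thesis
    using local_ratfun_if_nu_q_nonneg[OF subfield] by blast
qed

lemma local_integral_basis_S_pow: "local_integral_basis C l r \<beta> S_pow r"
  unfolding local_integral_basis_def
proof (intro conjI allI impI ballI)
  fix f assume f: "f \<in> integral_elems C l r \<beta>"
  have "f i = 0" if "r \<le> i" for i
    using f that by (auto simp: integral_elems_def A_elem_def)
  then show "\<exists>!c. (\<forall>j<r. local_ratfun C \<beta> (c j)) \<and> (\<forall>j\<ge>r. c j = 0) \<and>
      f = (\<lambda>i. \<Sum>j<r. c j * S_pow j i)"
    using integral_coeff_local[OF f] by (intro ex1I[of _ f]) (auto simp: S_pow_sum)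
qed (rule S_pow_integral)

end

theorem mainTheorem1:
  fixes C :: "'a::field_char_0 set" and l :: "nat \<Rightarrow> 'a poly" and r :: nat
    and \<alpha> \<zeta> :: 'a
  assumes "is_subfield C"
    and "alg_closed_type TYPE('a)"
    and "algebraic_over C"
    and "\<forall>i\<le>r. polyC C (l i)"
    and "l 0 \<noteq> 0" and "l r \<noteq> 0"
    and "\<exists>k::int. \<zeta> = \<alpha> + of_int k"
    and "\<forall>\<eta>\<in>{\<eta>. (\<exists>k::int. \<eta> = \<alpha> + of_int k) \<and> shift_less \<eta> \<zeta>}. poly (l 0 * l r) \<eta> \<noteq> 0"
  shows "\<forall>\<beta>\<in>{\<eta>. (\<exists>k::int. \<eta> = \<alpha> + of_int k) \<and> shift_less \<eta> \<zeta>} \<union> {\<zeta>}.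
           local_integral_basis C l r \<beta> S_pow r"
proof
  fix \<beta> assume \<beta>: "\<beta> \<in> {\<eta>. (\<exists>k::int. \<eta> = \<alpha> + of_int k) \<and> shift_less \<eta> \<zeta>} \<union> {\<zeta>}"
  then obtain k :: int where k: "\<beta> = \<alpha> + of_int k"
    using assms(7) by blast
  have "poly (l 0 * l r) (\<beta> + of_int n) \<noteq> 0" if "n < 0" for n :: int
  proof -
    have "\<beta> + of_int n = \<alpha> + of_int (k + n)"
      using k by simp
    moreover have "shift_less (\<beta> + of_int n) \<zeta>"
      using \<beta> \<open>n < 0\<close> by (intro shift_less_add_neg) auto
    ultimately show ?thesis
      using assms(8) by blast
  qed
  then interpret regular_below C l r \<beta>
    using assms(1,5,6) by unfold_locales (simp_all add: subfield_def)
  show "local_integral_basis C l r \<beta> S_pow r"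
    by (rule local_integral_basis_S_pow)
qed

end
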